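(* Let $\phi_1,\phi_2\in D=\{z\in\mathbb{C};|z|<1\}$ and let $Z$ be a random variable on the unit circle $\partial D$ with density, with respect to arc length, $$f(z)=\frac{1}{2\pi}\frac{|1-\phi_1\overline{\phi_2}|^2}{1-|\phi_1\overline{\phi_2}|^2}\frac{1-|\phi_1|^2}{|z-\phi_1|^2}\frac{1-|\phi_2|^2}{|z-\phi_2|^2}.$$ Then $E(Z)=0$ if and only if $\phi_1=-\phi_2$. *)

theory Defs
  imports "HOL-Analysis.Analysis"
begin

definition circ_density :: "complex \<Rightarrow> complex \<Rightarrow> complex \<Rightarrow> real" where
  "circ_density \<phi>1 \<phi>2 z =
     1 / (2 * pi)
     * ((cmod (1 - \<phi>1 * cnj \<phi>2))\<^sup>2 / (1 - (cmod (\<phi>1 * cnj \<phi>2))\<^sup>2))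
     * ((1 - (cmod \<phi>1)\<^sup>2) / (cmod (z - \<phi>1))\<^sup>2)
     * ((1 - (cmod \<phi>2)\<^sup>2) / (cmod (z - \<phi>2))\<^sup>2)"

text \<open>Expectation of a random variable Z on the unit circle with density f w.r.t.
arc length: E(Z) = integral over the circle of z f(z) d(arc length), computed via
the arc-length parametrisation t \<mapsto> cis t, t \<in> [0, 2 pi].\<close>
definition circle_expectation :: "(complex \<Rightarrow> real) \<Rightarrow> complex" where
  "circle_expectation f = integral {0..2*pi} (\<lambda>t. of_real (f (cis t)) * cis t)"

end

theory Submission
  imports Defs "HOL-Complex_Analysis.Cauchy_Integral_Formula"
begin

text \<open>On the unit circle the Poisson kernel \<open>(1 - |a|\<^sup>2) / |z - a|\<^sup>2\<close> agrees with the
rational function \<open>(1 - |a|\<^sup>2) z / ((z - a) (1 - cnj a z))\<close>, and \<open>dz = \<i> z dt\<close>. Hence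
\<open>E(Z)\<close> is a positive multiple of the contour integral of \<open>g z / ((z - \<phi>1) (z - \<phi>2))\<close>
over the unit circle, where \<open>g z = z\<^sup>2 / ((1 - cnj \<phi>1 z) (1 - cnj \<phi>2 z))\<close> is holomorphic
on the closed disc. By Cauchy's formula that integral is \<open>2 \<pi> \<i>\<close> times the divided
difference of \<open>g\<close> at \<open>\<phi>1, \<phi>2\<close> (the derivative if they coincide), and up to a nonvanishing
factor this divided difference is \<open>s - \<phi>1 \<phi>2 cnj s\<close> with \<open>s = \<phi>1 + \<phi>2\<close>, which
vanishes only for \<open>s = 0\<close> because \<open>|\<phi>1 \<phi>2| < 1\<close>.\<close>

lemma norm_mult_less_one:
  fixes a b :: "'a :: real_normed_div_algebra"
  assumes "norm a < 1" and "norm b < 1"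
  shows "norm (a * b) < 1"
  using assms mult_strict_mono'[of "norm a" 1 "norm b" 1] by (simp add: norm_mult)

lemma one_minus_cnj_mult_nonzero:
  assumes "cmod z \<le> 1" and "cmod a < 1"
  shows "1 - cnj a * z \<noteq> 0"
proof -
  have "cmod (cnj a * z) \<le> cmod a"
    using assms(1) mult_left_mono[of "cmod z" 1 "cmod a"] by (simp add: norm_mult)
  with assms(2) show ?thesis by auto
qed

lemma eq_mult_cnj_iff:
  assumes "cmod p < 1"
  shows "s = p * cnj s \<longleftrightarrow> s = 0"
proof
  assume "s = p * cnj s"
  hence "cmod s * (1 - cmod p) = 0"
    by (metis complex_mod_cnj norm_mult diff_self mult.commute right_diff_distrib' mult_1_right)
  with assms show "s = 0" by simp
qed simp

lemma has_field_derivative_square_div_square: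
  fixes c w :: "'a :: real_normed_field"
  assumes "1 - c * w \<noteq> 0"
  shows "((\<lambda>z. z\<^sup>2 / ((1 - c * z) * (1 - c * z))) has_field_derivative 2 * w / (1 - c * w)^3) (at w)"
proof -
  have "((\<lambda>z. z / (1 - c * z)) has_field_derivative 1 / (1 - c * w)\<^sup>2) (at w)"
    using assms by (auto intro!: derivative_eq_intros simp: field_simps power2_eq_square)
  from DERIV_power[OF this, of 2] assms show ?thesis
    by (simp add: power2_eq_square power3_eq_cube field_simps)
qed

definition divided_difference :: "(complex \<Rightarrow> complex) \<Rightarrow> complex \<Rightarrow> complex \<Rightarrow> complex" where
  "divided_difference g a b = (if a = b then deriv g a else (g a - g b) / (a - b))"

lemma Cauchy_integral_circlepath_divided_difference:
  assumes holg: "g holomorphic_on cball c r" and a: "a \<in> ball c r" and b: "b \<in> ball c r"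
  shows "((\<lambda>z. g z / ((z - a) * (z - b))) has_contour_integral
           2 * of_real pi * \<i> * divided_difference g a b) (circlepath c r)"
proof (cases "a = b")
  case True
  have "g holomorphic_on ball c r"
    using holg by (rule holomorphic_on_subset) auto
  moreover have "continuous_on (cball c r) g"
    using holg by (rule holomorphic_on_imp_continuous_on)
  ultimately have int: "(\<lambda>z. g z / (z - a)^2) contour_integrable_on (circlepath c r)"
    and der: "(g has_field_derivative
       1 / (2 * of_real pi * \<i>) * contour_integral (circlepath c r) (\<lambda>z. g z / (z - a)^2)) (at a)"
    using Cauchy_derivative_integral_circlepath a by blast+
  have "deriv g a = 1 / (2 * of_real pi * \<i>) * contour_integral (circlepath c r) (\<lambda>z. g z / (z - a)^2)"
    using der by (rule DERIV_imp_deriv)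
  hence "contour_integral (circlepath c r) (\<lambda>z. g z / (z - a)^2) = 2 * of_real pi * \<i> * deriv g a"
    by (simp add: field_simps)
  with has_contour_integral_integral[OF int] True show ?thesis
    by (simp add: divided_difference_def power2_eq_square)
next
  case False
  have dd: "2 * of_real pi * \<i> * divided_difference g a b
      = (2 * of_real pi * \<i> * g a - 2 * of_real pi * \<i> * g b) / (a - b)"
    using False by (simp add: divided_difference_def algebra_simps)
  have "((\<lambda>z. (g z / (z - a) - g z / (z - b)) / (a - b)) has_contour_integral
          2 * of_real pi * \<i> * divided_difference g a b) (circlepath c r)"
    unfolding dd using a b
    by (intro has_contour_integral_div has_contour_integral_diff
        Cauchy_integral_circlepath_simple[OF holg]) (auto simp: dist_norm norm_minus_commute)
  then show ?thesis
  proof (rule has_contour_integral_eq)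
    fix z assume "z \<in> path_image (circlepath c r)"
    hence "z - a \<noteq> 0" "z - b \<noteq> 0"
      using a b by (auto simp: dist_norm norm_minus_commute)
    hence "g z / (z - a) - g z / (z - b) = (a - b) * (g z / ((z - a) * (z - b)))"
      by (simp add: field_simps)
    with False show "(g z / (z - a) - g z / (z - b)) / (a - b) = g z / ((z - a) * (z - b))"
      by simp
  qed
qed

text \<open>On the circle \<open>cnj z = 1 / z\<close>, so \<open>|z - a|\<^sup>2 = (z - a) (1 - cnj a z) / z\<close>.\<close>

lemma poisson_kernel_on_circle:
  assumes z: "cmod z = 1" and a: "cmod a < 1"
  shows "complex_of_real ((1 - (cmod a)\<^sup>2) / (cmod (z - a))\<^sup>2)
       = of_real (1 - (cmod a)\<^sup>2) * z / ((z - a) * (1 - cnj a * z))"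
proof -
  have "z * cnj z = 1"
    using z complex_norm_square[of z] by simp
  hence "(z - a) * cnj (z - a) * z = (z - a) * (1 - cnj a * z)"
    by (simp add: algebra_simps)
  moreover have "z \<noteq> 0" "z - a \<noteq> 0" "1 - cnj a * z \<noteq> 0"
    using z a one_minus_cnj_mult_nonzero[of z a] by auto
  ultimately have "(z - a) * cnj (z - a) = (z - a) * (1 - cnj a * z) / z"
    and "z \<noteq> 0" "z - a \<noteq> 0" "1 - cnj a * z \<noteq> 0"
    by (simp_all add: field_simps)
  then show ?thesis
    by (simp only: of_real_divide complex_norm_square) (simp add: field_simps)
qed

definition poisson_product_numerator :: "complex \<Rightarrow> complex \<Rightarrow> complex \<Rightarrow> complex" where
  "poisson_product_numerator a b z = z\<^sup>2 / ((1 - cnj a * z) * (1 - cnj b * z))"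

lemma holomorphic_poisson_product_numerator:
  assumes "cmod a < 1" and "cmod b < 1"
  shows "poisson_product_numerator a b holomorphic_on cball 0 1"
  unfolding poisson_product_numerator_def using assms one_minus_cnj_mult_nonzero
  by (intro holomorphic_intros) auto

lemma divided_difference_poisson_product_numerator:
  assumes a: "cmod a < 1" and b: "cmod b < 1"
  shows "divided_difference (poisson_product_numerator a b) a b
       = (a + b - a * b * cnj (a + b))
         / ((1 - cnj a * a) * (1 - cnj b * a) * (1 - cnj a * b) * (1 - cnj b * b))"
proof -
  have nz: "1 - cnj a * a \<noteq> 0" "1 - cnj b * a \<noteq> 0" "1 - cnj a * b \<noteq> 0" "1 - cnj b * b \<noteq> 0"
    using a b one_minus_cnj_mult_nonzero by auto
  show ?thesis
  proof (cases "a = b")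
    case True
    have "(poisson_product_numerator a a has_field_derivative 2 * a / (1 - cnj a * a)^3) (at a)"
      unfolding poisson_product_numerator_def using nz(1) by (rule has_field_derivative_square_div_square)
    moreover have "a + a - a * a * cnj (a + a) = 2 * a * (1 - cnj a * a)"
      by (simp add: algebra_simps)
    ultimately show ?thesis
      using True nz(1) by (simp add: divided_difference_def DERIV_imp_deriv power3_eq_cube)
  next
    case False
    have "a\<^sup>2 * ((1 - cnj a * b) * (1 - cnj b * b)) - b\<^sup>2 * ((1 - cnj a * a) * (1 - cnj b * a))
        = (a - b) * (a + b - a * b * cnj (a + b))"
      by (simp add: power2_eq_square algebra_simps)
    hence "poisson_product_numerator a b a - poisson_product_numerator a b b
        = (a - b) * (a + b - a * b * cnj (a + b))
          / ((1 - cnj a * a) * (1 - cnj b * a) * ((1 - cnj a * b) * (1 - cnj b * b)))"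
      using nz by (simp add: poisson_product_numerator_def diff_frac_eq)
    with False show ?thesis
      by (simp add: divided_difference_def mult.assoc)
  qed
qed

lemma circ_density_on_circle:
  assumes a: "cmod a < 1" and b: "cmod b < 1"
  obtains c :: real where "c > 0"
    and "\<And>z. cmod z = 1 \<Longrightarrow> complex_of_real (circ_density a b z)
           = of_real c * (poisson_product_numerator a b z / ((z - a) * (z - b)))"
proof
  define A where "A = (cmod (1 - a * cnj b))\<^sup>2 / (1 - (cmod (a * cnj b))\<^sup>2)"
  define pa where "pa = 1 - (cmod a)\<^sup>2"
  define pb where "pb = 1 - (cmod b)\<^sup>2"
  have ab: "cmod (a * cnj b) < 1"
    using norm_mult_less_one[of a "cnj b"] a b by simp
  hence "1 - a * cnj b \<noteq> 0"
    by (metis norm_one order_less_irrefl right_minus_eq)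
  with ab have "A > 0"
    unfolding A_def by (intro divide_pos_pos) (auto simp: abs_square_less_1)
  moreover have "pa > 0" "pb > 0"
    unfolding pa_def pb_def using a b by (simp_all add: abs_square_less_1)
  ultimately show "A * pa * pb / (2 * pi) > 0"
    by simp
  fix z assume z: "cmod z = 1"
  have "complex_of_real (circ_density a b z)
      = of_real (1 / (2 * pi)) * of_real A
        * (of_real pa * z / ((z - a) * (1 - cnj a * z)))
        * (of_real pb * z / ((z - b) * (1 - cnj b * z)))"
    unfolding circ_density_def A_def pa_def pb_def of_real_mult
    by (simp only: poisson_kernel_on_circle[OF z a] poisson_kernel_on_circle[OF z b])
  moreover have "z - a \<noteq> 0" "z - b \<noteq> 0" "1 - cnj a * z \<noteq> 0" "1 - cnj b * z \<noteq> 0"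
    using z a b one_minus_cnj_mult_nonzero[of z] by auto
  ultimately show "complex_of_real (circ_density a b z)
      = of_real (A * pa * pb / (2 * pi)) * (poisson_product_numerator a b z / ((z - a) * (z - b)))"
    by (simp add: poisson_product_numerator_def field_simps power2_eq_square)
qed

lemma circle_expectation_eq_contour_integral:
  assumes "(F has_contour_integral I) (circlepath 0 1)"
    and "\<And>z. cmod z = 1 \<Longrightarrow> F z = of_real (f z)"
  shows "circle_expectation f = - \<i> * I"
proof -
  have "((\<lambda>t. F (cis t) * \<i> * cis t) has_integral I) {0..2*pi}"
    using assms(1) has_contour_integral_part_circlepath_iff[of 0 "2*pi" F I 0 1]
    by (simp add: circlepath_def)
  from has_integral_mult_right[OF this, of "- \<i>"]
  have "((\<lambda>t. of_real (f (cis t)) * cis t) has_integral - \<i> * I) {0..2*pi}"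
    by (simp add: assms(2) algebra_simps)
  then show ?thesis
    unfolding circle_expectation_def by (rule integral_unique)
qed

theorem corollary1:
  fixes \<phi>1 \<phi>2 :: complex
  assumes "cmod \<phi>1 < 1" and "cmod \<phi>2 < 1"
  shows "circle_expectation (circ_density \<phi>1 \<phi>2) = 0 \<longleftrightarrow> \<phi>1 = - \<phi>2"
proof -
  let ?dd = "divided_difference (poisson_product_numerator \<phi>1 \<phi>2) \<phi>1 \<phi>2"
  obtain c where c: "c > 0" and density: "\<And>z. cmod z = 1 \<Longrightarrow> complex_of_real (circ_density \<phi>1 \<phi>2 z)
      = of_real c * (poisson_product_numerator \<phi>1 \<phi>2 z / ((z - \<phi>1) * (z - \<phi>2)))"
    using circ_density_on_circle[OF assms] by blast
  have "((\<lambda>z. of_real c * (poisson_product_numerator \<phi>1 \<phi>2 z / ((z - \<phi>1) * (z - \<phi>2))))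
      has_contour_integral of_real c * (2 * of_real pi * \<i> * ?dd)) (circlepath 0 1)"
    using assms by (intro has_contour_integral_lmul Cauchy_integral_circlepath_divided_difference
        holomorphic_poisson_product_numerator) auto
  hence "circle_expectation (circ_density \<phi>1 \<phi>2) = - \<i> * (of_real c * (2 * of_real pi * \<i> * ?dd))"
    by (rule circle_expectation_eq_contour_integral) (simp add: density)
  hence "circle_expectation (circ_density \<phi>1 \<phi>2) = 0 \<longleftrightarrow> ?dd = 0"
    using c by simp
  also have "\<dots> \<longleftrightarrow> \<phi>1 + \<phi>2 = \<phi>1 * \<phi>2 * cnj (\<phi>1 + \<phi>2)"
    using assms one_minus_cnj_mult_nonzero
    by (simp add: divided_difference_poisson_product_numerator)
  also have "\<dots> \<longleftrightarrow> \<phi>1 + \<phi>2 = 0"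
    using eq_mult_cnj_iff norm_mult_less_one[OF assms] by blast
  finally show ?thesis
    by (auto simp: add_eq_0_iff)
qed

end
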